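(* The sets $\{3,4,7\}$, $\{3,6,7\}$, $\{4,5,8,9\}$, $\{4,7,8,11\}$, and $\{5,8,9,12,13\}$ lie both in $\mathcal L(C_6)$ and in $\mathcal L(C_2^5)$.
   Context: $C_n$ denotes a cyclic group of order $n$ and $C_2^r$ an elementary abelian $2$-group of rank $r$. For a subset $G_0$ of a finite abelian group $G$, a sequence over $G_0$ is an element of the free abelian monoid $\mathcal F(G_0)$ with basis $G_0$ (a finite unordered list of elements of $G_0$, repetitions allowed). $\mathcal B(G_0)$ is the monoid of zero-sum sequences over $G_0$ (including the empty sequence). An atom is a minimal zero-sum sequence, i.e. a nonempty zero-sum sequence that is not a product of two nonempty zero-sum sequences. For $B\in\mathcal B(G_0)$, $\mathsf L(B)=\{k\in\mathbb N_0: B \text{ is a product of } k \text{ atoms}\}$, and $\mathcal L(G_0)=\{\mathsf L(B):B\in\mathcal B(G_0)\}$; $\mathcal L(G)$ is the case $G_0=G$. *)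

theory Defs
  imports Main "HOL-Library.Multiset" "HOL-Library.Numeral_Type" "HOL-Library.Function_Algebras"
begin

text \<open>Sequences over a finite abelian group G (written additively, here G is a type
  of class ab_group_add) are finite multisets of group elements.\<close>

definition zero_sum :: "'a::ab_group_add multiset \<Rightarrow> bool" where
  "zero_sum S \<longleftrightarrow> sum_mset S = 0"

definition atom :: "'a::ab_group_add multiset \<Rightarrow> bool" where
  "atom A \<longleftrightarrow> A \<noteq> {#} \<and> zero_sum A \<and>
     (\<forall>U V. A = U + V \<and> zero_sum U \<and> zero_sum V \<longrightarrow> U = {#} \<or> V = {#})"

definition lengths :: "'a::ab_group_add multiset \<Rightarrow> nat set" where
  "lengths B = {size F | F. (\<forall>A \<in># F. atom A) \<and> sum_mset F = B}"

text \<open>System of sets of lengths of the whole group (G_0 = G, given as the type 'a).\<close>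
definition system_of_lengths :: "'a::ab_group_add itself \<Rightarrow> nat set set" where
  "system_of_lengths (_::'a itself) = {lengths B | B::'a multiset. zero_sum B}"

end

theory Submission
  imports Defs "HOL-Library.Indicator_Function"
begin

text \<open>
  In both groups each set is realised as the set of lengths of a single zero-sum sequence B
  whose support is small and in which one element occurs only once. Then only a handful of
  atoms divide B, so a factorization of B is the same thing as a vector of multiplicities of
  these atoms, i.e. a solution in nonnegative integers of a small linear system, and the set of
  lengths is read off from the finitely many solutions.

  In C6 = Z/6Z take B = 1^a 2 5^b; the atoms dividing it are 1^6, 5^6, 1 5, 1^4 2 and 2 5^2.
  In C2^5 with basis e1, ..., e5, e0 = e1 + ... + e5 and h = e1 + e2 take
  B = (e1 e2)^x (e3 e4 e5 e0)^y h; the atoms dividing it are the squares of e0, ..., e5 and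
  the three minimal relations e0 e1 e2 e3 e4 e5, h e1 e2 and h e3 e4 e5 e0.
\<close>

lemma atom_iff_minimal:
  "atom A \<longleftrightarrow> A \<noteq> {#} \<and> zero_sum A \<and> (\<forall>X. X \<subseteq># A \<and> X \<noteq> {#} \<and> zero_sum X \<longrightarrow> X = A)"
proof -
  have complement: "zero_sum (A - X)" if "X \<subseteq># A" "zero_sum A" "zero_sum X" for X
  proof -
    have "sum_mset A = sum_mset X + sum_mset (A - X)"
      using that(1) by (metis subset_mset.add_diff_inverse sum_mset.union)
    with that(2,3) show ?thesis by (simp add: zero_sum_def)
  qed
  show ?thesis
    unfolding atom_def
    by (metis add_diff_cancel_left' complement mset_subset_eq_add_left
        subset_mset.add_diff_inverse add_cancel_right_right)
qed

lemma atom_replicate_two: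
  fixes x :: "'a::ab_group_add"
  assumes "x \<noteq> 0" "x + x = 0"
  shows "atom (replicate_mset 2 x)"
  unfolding atom_iff_minimal
proof (intro conjI allI impI)
  show "zero_sum (replicate_mset 2 x)" using assms(2) by (simp add: zero_sum_def numeral_2_eq_2)
  fix X assume X: "X \<subseteq># replicate_mset 2 x \<and> X \<noteq> {#} \<and> zero_sum X"
  then obtain k where "X = replicate_mset k x" "0 < k" "k \<le> 2"
    by (metis msubseteq_replicate_msetE bot_nat_0.not_eq_extremum replicate_mset_0)
  with X assms(1) show "X = replicate_mset 2 x"
    by (auto simp: zero_sum_def numeral_2_eq_2 le_Suc_eq)
qed simp

lemma atom_eq_replicate_two:
  assumes "atom A" "x + x = 0" "2 \<le> count A x"
  shows "A = replicate_mset 2 x"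
proof -
  have "replicate_mset 2 x \<subseteq># A" using assms(3) by (simp add: count_le_replicate_mset_subset_eq)
  moreover have "zero_sum (replicate_mset 2 x)" using assms(2) by (simp add: zero_sum_def numeral_2_eq_2)
  ultimately show ?thesis using assms(1) unfolding atom_iff_minimal by auto
qed

section \<open>Sequences with prescribed multiplicities\<close>

fun of_counts :: "'a list \<Rightarrow> nat list \<Rightarrow> 'a multiset" where
  "of_counts (x # xs) (n # ns) = replicate_mset n x + of_counts xs ns"
| "of_counts _ _ = {#}"

lemma sum_mset_of_counts:
  "sum_mset (of_counts (A # As) (n # ns)) = repeat_mset n A + sum_mset (of_counts As ns)"
  "sum_mset (of_counts [] ns) = {#}"
  by (induction n) auto

lemma set_mset_of_counts: "set_mset (of_counts xs ns) \<subseteq> set xs"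
  by (induction xs ns rule: of_counts.induct) auto

lemma size_of_counts: "length ns = length xs \<Longrightarrow> size (of_counts xs ns) = sum_list ns"
  by (induction xs ns rule: of_counts.induct) auto

lemma counts_of_counts:
  "distinct xs \<Longrightarrow> length ns = length xs \<Longrightarrow> map (count (of_counts xs ns)) xs = ns"
proof (induction xs ns rule: of_counts.induct)
  case (1 x xs n ns)
  have "x \<notin># of_counts xs ns" using set_mset_of_counts[of xs ns] "1.prems"(1) by auto
  have "map (count (of_counts (x # xs) (n # ns))) xs = map (count (of_counts xs ns)) xs"
    using "1.prems"(1) by auto
  moreover have "count (of_counts (x # xs) (n # ns)) x = n"
    using \<open>x \<notin># of_counts xs ns\<close> by (simp add: not_in_iff)
  ultimately show ?case using 1 by (metis distinct.simps(2) length_Cons list.map(2) nat.inject)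
qed auto

lemma of_counts_eq_iff:
  assumes "distinct xs" "length ns = length xs" "length ms = length xs"
  shows "of_counts xs ns = of_counts xs ms \<longleftrightarrow> ns = ms"
  using counts_of_counts[OF assms(1,2)] counts_of_counts[OF assms(1,3)] by metis

lemma of_counts_counts:
  "distinct xs \<Longrightarrow> set_mset X \<subseteq> set xs \<Longrightarrow> of_counts xs (map (count X) xs) = X"
proof (induction xs arbitrary: X)
  case (Cons x xs)
  let ?Y = "X - replicate_mset (count X x) x"
  have "set_mset ?Y \<subseteq> set xs"
  proof
    fix y assume "y \<in># ?Y"
    then have "y \<noteq> x" "y \<in># X" by (auto simp: in_diff_count split: if_splits)
    with Cons.prems(2) show "y \<in> set xs" by auto
  qed
  then have "of_counts xs (map (count ?Y) xs) = ?Y" using Cons by simp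
  moreover have "map (count ?Y) xs = map (count X) xs" using Cons.prems(1) by auto
  ultimately show ?case by (simp add: count_le_replicate_mset_subset_eq[symmetric])
qed simp

lemma of_counts_add:
  "length ns = length ms \<Longrightarrow> of_counts xs ns + of_counts xs ms = of_counts xs (map2 (+) ns ms)"
  by (induction xs ns arbitrary: ms rule: of_counts.induct) (auto simp: Suc_length_conv multiset_eq_iff)

lemma repeat_mset_of_counts: "repeat_mset c (of_counts xs ns) = of_counts xs (map ((*) c) ns)"
  by (induction xs ns rule: of_counts.induct) (auto intro: multiset_eqI)

lemma of_counts_mono: "list_all2 (\<le>) ms ns \<Longrightarrow> of_counts xs ms \<subseteq># of_counts xs ns"
  by (induction xs ns arbitrary: ms rule: of_counts.induct)
     (auto simp: list_all2_Cons2 subset_mset.add_mono replicate_mset_msubseteq_iff)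

lemma subset_of_counts:
  assumes "X \<subseteq># of_counts xs ns" "distinct xs" "length ns = length xs"
  shows "X = of_counts xs (map (count X) xs) \<and> list_all2 (\<le>) (map (count X) xs) ns"
proof
  show "X = of_counts xs (map (count X) xs)"
    using of_counts_counts assms set_mset_of_counts by (metis mset_subset_eqD subsetI subset_iff)
  have "list_all2 (\<le>) (map (count X) xs) (map (count (of_counts xs ns)) xs)"
    using assms(1) by (auto simp: list.rel_map intro!: list.rel_refl_strong mset_subset_eq_count)
  then show "list_all2 (\<le>) (map (count X) xs) ns" using counts_of_counts[OF assms(2,3)] by simp
qed

lemma all_list_all2_Nil: "(\<forall>ms. list_all2 P ms [] \<longrightarrow> Q ms) \<longleftrightarrow> Q []"
  by auto

lemma all_list_all2_Cons:
  "(\<forall>ms. list_all2 P ms (n # ns) \<longrightarrow> Q ms) \<longleftrightarrow>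
    (\<forall>m. P m n \<longrightarrow> (\<forall>ms. list_all2 P ms ns \<longrightarrow> Q (m # ms)))"
  by (auto simp: list_all2_Cons2)

lemma atom_of_counts_iff:
  assumes "distinct xs" "length ns = length xs"
  shows "atom (of_counts xs ns) \<longleftrightarrow> 0 < sum_list ns \<and> zero_sum (of_counts xs ns) \<and>
    (\<forall>ms. list_all2 (\<le>) ms ns \<longrightarrow> 0 < sum_list ms \<longrightarrow> zero_sum (of_counts xs ms) \<longrightarrow> ms = ns)"
  (is "_ \<longleftrightarrow> _ \<and> _ \<and> ?minimal")
proof -
  have nonempty: "of_counts xs ms \<noteq> {#} \<longleftrightarrow> 0 < sum_list ms" if "length ms = length xs" for ms
    using size_of_counts[OF that] by (metis size_eq_0_iff_empty bot_nat_0.not_eq_extremum)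
  have "(\<forall>X. X \<subseteq># of_counts xs ns \<and> X \<noteq> {#} \<and> zero_sum X \<longrightarrow> X = of_counts xs ns) \<longleftrightarrow> ?minimal"
  proof (intro iffI allI impI)
    fix ms assume "\<forall>X. X \<subseteq># of_counts xs ns \<and> X \<noteq> {#} \<and> zero_sum X \<longrightarrow> X = of_counts xs ns"
      and ms: "list_all2 (\<le>) ms ns" "0 < sum_list ms" "zero_sum (of_counts xs ms)"
    moreover have "length ms = length xs" using ms assms(2) by (auto dest: list_all2_lengthD)
    ultimately have "of_counts xs ms = of_counts xs ns"
      using of_counts_mono nonempty by blast
    then show "ms = ns" using of_counts_eq_iff[OF assms(1,2) \<open>length ms = length xs\<close>] by simp
  next
    fix X assume min: ?minimal and X: "X \<subseteq># of_counts xs ns \<and> X \<noteq> {#} \<and> zero_sum X"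
    let ?ms = "map (count X) xs"
    have "X = of_counts xs ?ms" "list_all2 (\<le>) ?ms ns" using subset_of_counts[OF _ assms] X by auto
    moreover from this(1) X have "0 < sum_list ?ms" using nonempty[of ?ms] by simp
    ultimately show "X = of_counts xs ns" using min X by metis
  qed
  then show ?thesis
    unfolding atom_iff_minimal nonempty[OF assms(2)] by (rule conj_cong[OF refl conj_cong[OF refl]])
qed

lemma lengths_eq_counts_of_atoms:
  assumes "distinct As" "\<forall>A \<in> set As. atom A" "\<And>A. atom A \<Longrightarrow> A \<subseteq># B \<Longrightarrow> A \<in> set As"
  shows "lengths B = {sum_list cs | cs. length cs = length As \<and> sum_mset (of_counts As cs) = B}"
  (is "_ = ?lengths")
proof (intro equalityI subsetI)
  fix n assume "n \<in> lengths B"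
  then obtain F where F: "n = size F" "\<forall>A \<in># F. atom A" "sum_mset F = B"
    unfolding lengths_def by blast
  have "set_mset F \<subseteq> set As"
  proof
    fix A assume "A \<in># F"
    then obtain F' where "F = add_mset A F'" by (blast dest: multi_member_split)
    then have "B = A + sum_mset F'" using F(3) by simp
    then have "A \<subseteq># B" by simp
    with \<open>A \<in># F\<close> F(2) assms(3) show "A \<in> set As" by blast
  qed
  then have "of_counts As (map (count F) As) = F" using of_counts_counts[OF assms(1)] by blast
  moreover have "sum_list (map (count F) As) = n"
    using size_of_counts[of "map (count F) As" As] F(1) calculation by simp
  ultimately show "n \<in> ?lengths" using F(3) by (intro CollectI exI[of _ "map (count F) As"]) simp
next
  fix n assume "n \<in> ?lengths"
  then obtain cs where cs: "n = sum_list cs" "length cs = length As" "sum_mset (of_counts As cs) = B"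
    by blast
  moreover have "\<forall>A \<in># of_counts As cs. atom A" using set_mset_of_counts[of As cs] assms(2) by auto
  moreover have "size (of_counts As cs) = n" using size_of_counts[OF cs(2)] cs(1) by simp
  ultimately show "n \<in> lengths B"
    unfolding lengths_def by (intro CollectI exI[of _ "of_counts As cs"]) simp
qed

lemma lengths_in_system_of_lengths:
  "zero_sum (B :: 'a::ab_group_add multiset) \<Longrightarrow> lengths B \<in> system_of_lengths TYPE('a)"
  unfolding system_of_lengths_def by blast

section \<open>The cyclic group of order 6\<close>

abbreviation seq_C6 :: "nat \<Rightarrow> nat \<Rightarrow> nat \<Rightarrow> 6 multiset" where
  "seq_C6 i j k \<equiv> of_counts [1, 2, 5] [i, j, k]"

lemma zero_sum_seq_C6: "zero_sum (seq_C6 i j k) \<longleftrightarrow> 6 dvd i + 2*j + 5*k"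
proof -
  have "of_nat (i + 2*j + 5*k) = sum_mset (seq_C6 i j k)" by (simp add: algebra_simps)
  moreover have "(of_nat n :: 6) = 0 \<longleftrightarrow> 6 dvd n" for n by (simp add: of_nat_eq_0_iff_char_dvd)
  ultimately show ?thesis unfolding zero_sum_def by metis
qed

lemma atom_seq_C6_iff:
  "atom (seq_C6 i j k) \<longleftrightarrow> 0 < i + j + k \<and> 6 dvd i + 2*j + 5*k \<and>
    (\<forall>i' \<le> i. \<forall>j' \<le> j. \<forall>k' \<le> k.
      0 < i' + j' + k' \<and> 6 dvd i' + 2*j' + 5*k' \<longrightarrow> i' = i \<and> j' = j \<and> k' = k)"
  by (subst atom_of_counts_iff)
     (simp_all add: zero_sum_seq_C6 all_list_all2_Cons all_list_all2_Nil del: of_counts.simps, blast)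

definition atoms_C6 :: "6 multiset list" where
  "atoms_C6 = [seq_C6 6 0 0, seq_C6 0 0 6, seq_C6 1 0 1, seq_C6 4 1 0, seq_C6 0 1 2]"

lemma atoms_C6_are_atoms: "\<forall>A \<in> set atoms_C6. atom A"
  unfolding atoms_C6_def by (simp add: atom_seq_C6_iff del: of_counts.simps) presburger

lemma atom_seq_C6_cases:
  assumes "atom (seq_C6 i j k)" "j \<le> 1"
  shows "seq_C6 i j k \<in> set atoms_C6"
proof -
  have nonempty: "0 < i + j + k" and zero_sum: "6 dvd i + 2*j + 5*k"
    and minimal: "\<And>i' j' k'. i' \<le> i \<Longrightarrow> j' \<le> j \<Longrightarrow> k' \<le> k \<Longrightarrow> 0 < i' + j' + k' \<Longrightarrow>
      6 dvd i' + 2*j' + 5*k' \<Longrightarrow> i' = i \<and> j' = j \<and> k' = k"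
    using assms(1) unfolding atom_seq_C6_iff by blast+
  have "(i, j, k) \<in> {(6, 0, 0), (0, 0, 6), (1, 0, 1), (4, 1, 0), (0, 1, 2)}"
  proof (cases "1 \<le> i \<and> 1 \<le> k")
    case True
    then show ?thesis using minimal[of 1 0 1] by simp
  next
    case False
    then consider "i = 0" "j = 0" | "k = 0" "j = 0" | "i = 0" "j = 1" | "k = 0" "j = 1"
      using assms(2) by linarith
    then show ?thesis
    proof cases
      case 1
      then have "6 \<le> k" using nonempty zero_sum by presburger
      then show ?thesis using minimal[of 0 0 6] 1 by simp
    next
      case 2
      then have "6 \<le> i" using nonempty zero_sum by presburger
      then show ?thesis using minimal[of 6 0 0] 2 by simp
    next
      case 3
      then have "2 \<le> k" using zero_sum by presburger
      then show ?thesis using minimal[of 0 1 2] 3 by simp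
    next
      case 4
      then have "4 \<le> i" using zero_sum by presburger
      then show ?thesis using minimal[of 4 1 0] 4 by simp
    qed
  qed
  then show ?thesis unfolding atoms_C6_def by auto
qed

lemma atom_dvd_seq_C6:
  assumes "atom A" "A \<subseteq># seq_C6 a 1 b"
  shows "A \<in> set atoms_C6"
proof -
  have "A = seq_C6 (count A 1) (count A 2) (count A 5)" "count A 2 \<le> 1"
    using subset_of_counts[OF assms(2)] by (simp_all del: of_counts.simps)
  then show ?thesis using atom_seq_C6_cases assms(1) by metis
qed

lemma sum_mset_of_counts_atoms_C6:
  "sum_mset (of_counts atoms_C6 [c1, c2, c3, c4, c5]) =
     seq_C6 (6*c1 + c3 + 4*c4) (c4 + c5) (6*c2 + c3 + 2*c5)"
  unfolding atoms_C6_def sum_mset_of_counts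
  by (simp add: repeat_mset_of_counts of_counts_add algebra_simps del: of_counts.simps)

text \<open>The multiplicities of the five atoms of \<open>atoms_C6\<close>, in this order, in a factorization of
  \<open>seq_C6 a 1 b\<close>.\<close>

definition factorization_exponents_C6 ::
    "nat \<Rightarrow> nat \<Rightarrow> (nat \<times> nat \<times> nat \<times> nat \<times> nat) set" where
  "factorization_exponents_C6 a b =
    {(c1, c2, c3, c4, c5). 6*c1 + c3 + 4*c4 = a \<and> 6*c2 + c3 + 2*c5 = b \<and> c4 + c5 = 1}"

lemma lengths_seq_C6:
  "lengths (seq_C6 a 1 b) =
    (\<lambda>(c1, c2, c3, c4, c5). c1 + c2 + c3 + c4 + c5) ` factorization_exponents_C6 a b"
  (is "_ = ?sizes")
proof -
  have "distinct atoms_C6" by (simp add: atoms_C6_def of_counts_eq_iff del: of_counts.simps)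
  then have lengths: "lengths (seq_C6 a 1 b) =
      {sum_list cs | cs. length cs = length atoms_C6 \<and> sum_mset (of_counts atoms_C6 cs) = seq_C6 a 1 b}"
    (is "_ = ?factorization_lengths")
    using lengths_eq_counts_of_atoms atoms_C6_are_atoms atom_dvd_seq_C6 by blast
  have factorization_iff: "sum_mset (of_counts atoms_C6 [c1, c2, c3, c4, c5]) = seq_C6 a 1 b \<longleftrightarrow>
      (c1, c2, c3, c4, c5) \<in> factorization_exponents_C6 a b" for c1 c2 c3 c4 c5
    by (auto simp: sum_mset_of_counts_atoms_C6 of_counts_eq_iff factorization_exponents_C6_def
        simp del: of_counts.simps)
  show ?thesis
    unfolding lengths
  proof (intro equalityI subsetI)
    fix n assume "n \<in> ?factorization_lengths"
    then obtain cs
      where cs: "n = sum_list cs" "length cs = 5" "sum_mset (of_counts atoms_C6 cs) = seq_C6 a 1 b"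
      by (auto simp: atoms_C6_def simp del: of_counts.simps)
    then obtain c1 c2 c3 c4 c5 where "cs = [c1, c2, c3, c4, c5]"
      by (auto simp: numeral_eq_Suc length_Suc_conv)
    with cs have "sum_mset (of_counts atoms_C6 [c1, c2, c3, c4, c5]) = seq_C6 a 1 b" by simp
    then have "(c1, c2, c3, c4, c5) \<in> factorization_exponents_C6 a b"
      using factorization_iff by blast
    moreover have "n = c1 + c2 + c3 + c4 + c5" using cs(1) \<open>cs = _\<close> by simp
    ultimately show "n \<in> ?sizes" by force
  next
    fix n assume "n \<in> ?sizes"
    then obtain c1 c2 c3 c4 c5
      where "n = c1 + c2 + c3 + c4 + c5" "(c1, c2, c3, c4, c5) \<in> factorization_exponents_C6 a b"
      by auto
    then show "n \<in> ?factorization_lengths"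
      using factorization_iff
      by (intro CollectI exI[of _ "[c1, c2, c3, c4, c5]"]) (simp add: atoms_C6_def del: of_counts.simps)
  qed
qed

lemma factorization_exponents_C6_6_8:
  "factorization_exponents_C6 6 8 = {(1, 1, 0, 0, 1), (0, 1, 2, 1, 0), (0, 0, 6, 0, 1)}"
  (is "_ = ?solutions")
proof (intro equalityI subsetI)
  fix c assume "c \<in> factorization_exponents_C6 6 8"
  then obtain c1 c2 c3 c4 c5 where c: "c = (c1, c2, c3, c4, c5)"
    and eqs: "6*c1 + c3 + 4*c4 = 6" "6*c2 + c3 + 2*c5 = 8" "c4 + c5 = 1"
    unfolding factorization_exponents_C6_def by blast
  have "c1 \<le> 1" "c4 \<le> 1" using eqs by linarith+
  then have "c1 = 0 \<or> c1 = 1" "c4 = 0 \<or> c4 = 1" by auto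
  then show "c \<in> ?solutions"
    using eqs unfolding c by (elim disjE) auto
qed (auto simp: factorization_exponents_C6_def)

lemma factorization_exponents_C6_10_6:
  "factorization_exponents_C6 10 6 = {(1, 1, 0, 1, 0), (1, 0, 4, 0, 1), (0, 0, 6, 1, 0)}"
  (is "_ = ?solutions")
proof (intro equalityI subsetI)
  fix c assume "c \<in> factorization_exponents_C6 10 6"
  then obtain c1 c2 c3 c4 c5 where c: "c = (c1, c2, c3, c4, c5)"
    and eqs: "6*c1 + c3 + 4*c4 = 10" "6*c2 + c3 + 2*c5 = 6" "c4 + c5 = 1"
    unfolding factorization_exponents_C6_def by blast
  have "c1 \<le> 1" "c4 \<le> 1" using eqs by linarith+
  then have "c1 = 0 \<or> c1 = 1" "c4 = 0 \<or> c4 = 1" by auto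
  then show "c \<in> ?solutions"
    using eqs unfolding c by (elim disjE) auto
qed (auto simp: factorization_exponents_C6_def)

lemma factorization_exponents_C6_12_8:
  "factorization_exponents_C6 12 8 = {(2, 1, 0, 0, 1), (1, 1, 2, 1, 0), (1, 0, 6, 0, 1), (0, 0, 8, 1, 0)}"
  (is "_ = ?solutions")
proof (intro equalityI subsetI)
  fix c assume "c \<in> factorization_exponents_C6 12 8"
  then obtain c1 c2 c3 c4 c5 where c: "c = (c1, c2, c3, c4, c5)"
    and eqs: "6*c1 + c3 + 4*c4 = 12" "6*c2 + c3 + 2*c5 = 8" "c4 + c5 = 1"
    unfolding factorization_exponents_C6_def by blast
  have "c1 \<le> 2" "c4 \<le> 1" using eqs by linarith+
  then have "c1 = 0 \<or> c1 = 1 \<or> c1 = 2" "c4 = 0 \<or> c4 = 1" by auto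
  then show "c \<in> ?solutions"
    using eqs unfolding c by (elim disjE) auto
qed (auto simp: factorization_exponents_C6_def)

lemma factorization_exponents_C6_10_12:
  "factorization_exponents_C6 10 12 = {(1, 2, 0, 1, 0), (1, 1, 4, 0, 1), (0, 1, 6, 1, 0), (0, 0, 10, 0, 1)}"
  (is "_ = ?solutions")
proof (intro equalityI subsetI)
  fix c assume "c \<in> factorization_exponents_C6 10 12"
  then obtain c1 c2 c3 c4 c5 where c: "c = (c1, c2, c3, c4, c5)"
    and eqs: "6*c1 + c3 + 4*c4 = 10" "6*c2 + c3 + 2*c5 = 12" "c4 + c5 = 1"
    unfolding factorization_exponents_C6_def by blast
  have "c1 \<le> 1" "c4 \<le> 1" using eqs by linarith+
  then have "c1 = 0 \<or> c1 = 1" "c4 = 0 \<or> c4 = 1" by auto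
  then show "c \<in> ?solutions"
    using eqs unfolding c by (elim disjE) auto
qed (auto simp: factorization_exponents_C6_def)

lemma factorization_exponents_C6_16_12:
  "factorization_exponents_C6 16 12 =
    {(2, 2, 0, 1, 0), (2, 1, 4, 0, 1), (1, 1, 6, 1, 0), (1, 0, 10, 0, 1), (0, 0, 12, 1, 0)}"
  (is "_ = ?solutions")
proof (intro equalityI subsetI)
  fix c assume "c \<in> factorization_exponents_C6 16 12"
  then obtain c1 c2 c3 c4 c5 where c: "c = (c1, c2, c3, c4, c5)"
    and eqs: "6*c1 + c3 + 4*c4 = 16" "6*c2 + c3 + 2*c5 = 12" "c4 + c5 = 1"
    unfolding factorization_exponents_C6_def by blast
  have "c1 \<le> 2" "c4 \<le> 1" using eqs by linarith+
  then have "c1 = 0 \<or> c1 = 1 \<or> c1 = 2" "c4 = 0 \<or> c4 = 1" by auto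
  then show "c \<in> ?solutions"
    using eqs unfolding c by (elim disjE) auto
qed (auto simp: factorization_exponents_C6_def)

section \<open>The elementary abelian 2-group of rank 5\<close>

lemma UNIV_5: "(UNIV :: 5 set) = {0, 1, 2, 3, 4}"
proof -
  have "card {0, 1, 2, 3, 4 :: 5} = CARD(5)" by simp
  then show ?thesis by (intro card_subset_eq[symmetric]) auto
qed

lemma add_self_fun_2: "(x :: 'a \<Rightarrow> 2) + x = 0"
proof
  fix j
  have "(2::2) = 0" by simp
  then show "(x + x) j = 0 j" by (metis mult_2 mult_zero_left plus_fun_apply zero_fun_apply)
qed

text \<open>Elements of C2^5 are functions \<open>5 \<Rightarrow> 2\<close>: \<open>indicator {i}\<close> is a basis vector,
  \<open>1\<close> is the sum e0 of the basis and \<open>indicator {0, 1}\<close> is h = e1 + e2.\<close>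

abbreviation support_C2_5 :: "(5 \<Rightarrow> 2) list" where
  "support_C2_5 \<equiv>
    [indicator {0}, indicator {1}, indicator {2}, indicator {3}, indicator {4}, 1, indicator {0, 1}]"

abbreviation seq_C2_5 ::
    "nat \<Rightarrow> nat \<Rightarrow> nat \<Rightarrow> nat \<Rightarrow> nat \<Rightarrow> nat \<Rightarrow> nat \<Rightarrow> (5 \<Rightarrow> 2) multiset" where
  "seq_C2_5 a b c d e f g \<equiv> of_counts support_C2_5 [a, b, c, d, e, f, g]"

lemma distinct_support_C2_5: "distinct support_C2_5"
  by (rule distinct_map[where f = "\<lambda>v. [v 0, v 1, v 2, v 3, v 4]", THEN iffD1, THEN conjunct1])
    simp

lemma zero_sum_seq_C2_5:
  "zero_sum (seq_C2_5 a b c d e f g) \<longleftrightarrow>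
    even (a + f + g) \<and> even (b + f + g) \<and> even (c + f) \<and> even (d + f) \<and> even (e + f)"
proof -
  let ?s = "sum_mset (seq_C2_5 a b c d e f g)"
  have coordinates: "?s 0 = of_nat (a + f + g)" "?s 1 = of_nat (b + f + g)"
    "?s 2 = of_nat (c + f)" "?s 3 = of_nat (d + f)" "?s 4 = of_nat (e + f)"
    by simp_all
  have "?s = 0 \<longleftrightarrow> (\<forall>j \<in> {0, 1, 2, 3, 4}. ?s j = 0)"
    unfolding UNIV_5[symmetric] by (simp add: fun_eq_iff del: of_counts.simps)
  moreover have "(of_nat n :: 2) = 0 \<longleftrightarrow> even n" for n by (simp add: of_nat_eq_0_iff_char_dvd)
  ultimately show ?thesis unfolding zero_sum_def by (simp only: ball_simps coordinates simp_thms)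
qed

abbreviation squarefree_atom_counts_C2_5 :: "(nat \<times> nat \<times> nat \<times> nat \<times> nat \<times> nat \<times> nat) set" where
  "squarefree_atom_counts_C2_5 \<equiv> {(1, 1, 1, 1, 1, 1, 0), (1, 1, 0, 0, 0, 0, 1), (0, 0, 1, 1, 1, 1, 1)}"

lemma squarefree_zero_sum_seq_C2_5:
  assumes "a \<le> 1" "b \<le> 1" "c \<le> 1" "d \<le> 1" "e \<le> 1" "f \<le> 1" "g \<le> 1"
    and "0 < a + b + c + d + e + f + g" "zero_sum (seq_C2_5 a b c d e f g)"
  shows "(a, b, c, d, e, f, g) \<in> squarefree_atom_counts_C2_5"
proof -
  have "a = 0 \<or> a = 1" "b = 0 \<or> b = 1" "c = 0 \<or> c = 1" "d = 0 \<or> d = 1" "e = 0 \<or> e = 1"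
    "f = 0 \<or> f = 1" "g = 0 \<or> g = 1"
    using assms(1-7) by linarith+
  then show ?thesis using assms(8,9) unfolding zero_sum_seq_C2_5 by (elim disjE) simp_all
qed

lemma atom_seq_C2_5_squarefree:
  assumes "(a, b, c, d, e, f, g) \<in> squarefree_atom_counts_C2_5"
  shows "atom (seq_C2_5 a b c d e f g)"
proof -
  have "ms = [a, b, c, d, e, f, g]"
    if le: "list_all2 (\<le>) ms [a, b, c, d, e, f, g]" and nonzero: "0 < sum_list ms"
      and zero_sum: "zero_sum (of_counts support_C2_5 ms)"
    for ms
  proof -
    obtain a' b' c' d' e' f' g' where ms: "ms = [a', b', c', d', e', f', g']"
      and "a' \<le> a" "b' \<le> b" "c' \<le> c" "d' \<le> d" "e' \<le> e" "f' \<le> f" "g' \<le> g"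
      using le by (auto simp: list_all2_Cons2)
    moreover have "(a', b', c', d', e', f', g') \<in> squarefree_atom_counts_C2_5"
      by (rule squarefree_zero_sum_seq_C2_5)
         (use assms nonzero zero_sum calculation in \<open>auto simp del: of_counts.simps\<close>)
    ultimately show ?thesis using assms by auto
  qed
  then show ?thesis
    using assms by (subst atom_of_counts_iff[OF distinct_support_C2_5])
      (auto simp: zero_sum_seq_C2_5 simp del: of_counts.simps)
qed

definition atoms_C2_5 :: "(5 \<Rightarrow> 2) multiset list" where
  "atoms_C2_5 =
    [seq_C2_5 2 0 0 0 0 0 0, seq_C2_5 0 2 0 0 0 0 0, seq_C2_5 0 0 2 0 0 0 0, seq_C2_5 0 0 0 2 0 0 0,
     seq_C2_5 0 0 0 0 2 0 0, seq_C2_5 0 0 0 0 0 2 0,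
     seq_C2_5 1 1 1 1 1 1 0, seq_C2_5 1 1 0 0 0 0 1, seq_C2_5 0 0 1 1 1 1 1]"

lemma zero_notin_support_C2_5: "0 \<notin> set support_C2_5"
proof -
  let ?coordinates = "\<lambda>v :: 5 \<Rightarrow> 2. [v 0, v 1, v 2, v 3, v 4]"
  have "?coordinates 0 \<notin> ?coordinates ` set support_C2_5" by simp
  then show ?thesis by blast
qed

lemma atoms_C2_5_are_atoms: "\<forall>A \<in> set atoms_C2_5. atom A"
proof -
  have "atom (replicate_mset 2 x)" if "x \<in> set support_C2_5" for x
    using atom_replicate_two[OF _ add_self_fun_2] zero_notin_support_C2_5 that by metis
  moreover have "atom (seq_C2_5 1 1 1 1 1 1 0)" "atom (seq_C2_5 1 1 0 0 0 0 1)"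
    "atom (seq_C2_5 0 0 1 1 1 1 1)"
    by (simp_all add: atom_seq_C2_5_squarefree del: of_counts.simps)
  ultimately show ?thesis unfolding atoms_C2_5_def by simp
qed

lemma atom_dvd_seq_C2_5:
  assumes "atom A" "A \<subseteq># seq_C2_5 a b c d e f 1"
  shows "A \<in> set atoms_C2_5"
proof (cases "\<exists>x. 2 \<le> count A x")
  case True
  then obtain x where x: "2 \<le> count A x" by blast
  then have A: "A = replicate_mset 2 x" using atom_eq_replicate_two[OF assms(1) add_self_fun_2] by blast
  have "count A x \<le> count (seq_C2_5 a b c d e f 1) x" using assms(2) by (rule mset_subset_eq_count)
  with x have "0 < count (seq_C2_5 a b c d e f 1) x" by linarith
  then have "x \<in># seq_C2_5 a b c d e f 1" by (simp only: count_greater_zero_iff)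
  then have "x \<in> set support_C2_5" by (rule subsetD[OF set_mset_of_counts])
  moreover have "count (seq_C2_5 a b c d e f 1) (indicator {0, 1}) = 1"
    using counts_of_counts[OF distinct_support_C2_5, of "[a, b, c, d, e, f, 1]"]
    by (simp del: of_counts.simps)
  with \<open>count A x \<le> _\<close> x have "x \<noteq> indicator {0, 1}" by auto
  ultimately show ?thesis unfolding A atoms_C2_5_def by auto
next
  case False
  then have small: "count A x \<le> 1" for x by (metis not_le one_add_one Suc_eq_plus1 less_Suc_eq_le)
  let ?counts = "map (count A) support_C2_5"
  have A: "A = of_counts support_C2_5 ?counts"
    using subset_of_counts[OF assms(2) distinct_support_C2_5] by simp
  have "0 < sum_list ?counts" "zero_sum (of_counts support_C2_5 ?counts)"
    using assms(1) atom_of_counts_iff[OF distinct_support_C2_5, of ?counts] A by auto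
  then have "(count A (indicator {0}), count A (indicator {1}), count A (indicator {2}), count A (indicator {3}),
      count A (indicator {4}), count A 1, count A (indicator {0, 1})) \<in> squarefree_atom_counts_C2_5"
    by (intro squarefree_zero_sum_seq_C2_5 small) (simp_all del: of_counts.simps)
  then show ?thesis by (subst A) (auto simp: atoms_C2_5_def simp del: of_counts.simps)
qed

lemma sum_mset_of_counts_atoms_C2_5:
  "sum_mset (of_counts atoms_C2_5 [s1, s2, s3, s4, s5, s6, u, h1, h2]) =
     seq_C2_5 (2*s1 + u + h1) (2*s2 + u + h1) (2*s3 + u + h2) (2*s4 + u + h2) (2*s5 + u + h2)
       (2*s6 + u + h2) (h1 + h2)"
  unfolding atoms_C2_5_def sum_mset_of_counts
  by (simp add: repeat_mset_of_counts of_counts_add algebra_simps del: of_counts.simps)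

text \<open>In a factorization of \<open>seq_C2_5 x x y y y y 1\<close> the squares of e1 and e2 occur with the same
  multiplicity s, the squares of e3, e4, e5, e0 with the same multiplicity t, and u, h1, h2 are
  the multiplicities of the three squarefree atoms.\<close>

definition factorization_exponents_C2_5 ::
    "nat \<Rightarrow> nat \<Rightarrow> (nat \<times> nat \<times> nat \<times> nat \<times> nat) set" where
  "factorization_exponents_C2_5 x y =
    {(s, t, u, h1, h2). 2*s + u + h1 = x \<and> 2*t + u + h2 = y \<and> h1 + h2 = 1}"

lemma lengths_seq_C2_5:
  "lengths (seq_C2_5 x x y y y y 1) =
    (\<lambda>(s, t, u, h1, h2). 2*s + 4*t + u + h1 + h2) ` factorization_exponents_C2_5 x y"
  (is "_ = ?sizes")
proof -
  have "distinct atoms_C2_5"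
    by (simp add: atoms_C2_5_def of_counts_eq_iff[OF distinct_support_C2_5] del: of_counts.simps)
  then have lengths: "lengths (seq_C2_5 x x y y y y 1) =
      {sum_list cs | cs. length cs = length atoms_C2_5 \<and> sum_mset (of_counts atoms_C2_5 cs) = seq_C2_5 x x y y y y 1}"
    (is "_ = ?factorization_lengths")
    using lengths_eq_counts_of_atoms atoms_C2_5_are_atoms atom_dvd_seq_C2_5 by blast
  have factorization_iff:
    "sum_mset (of_counts atoms_C2_5 [s1, s2, s3, s4, s5, s6, u, h1, h2]) = seq_C2_5 x x y y y y 1 \<longleftrightarrow>
      s2 = s1 \<and> s4 = s3 \<and> s5 = s3 \<and> s6 = s3 \<and> (s1, s3, u, h1, h2) \<in> factorization_exponents_C2_5 x y"
    for s1 s2 s3 s4 s5 s6 u h1 h2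
    by (auto simp: sum_mset_of_counts_atoms_C2_5 of_counts_eq_iff[OF distinct_support_C2_5]
        factorization_exponents_C2_5_def simp del: of_counts.simps)
  show ?thesis
    unfolding lengths
  proof (intro equalityI subsetI)
    fix n assume "n \<in> ?factorization_lengths"
    then obtain cs where cs: "n = sum_list cs" "length cs = 9"
        "sum_mset (of_counts atoms_C2_5 cs) = seq_C2_5 x x y y y y 1"
      by (auto simp: atoms_C2_5_def simp del: of_counts.simps)
    then obtain s1 s2 s3 s4 s5 s6 u h1 h2 where "cs = [s1, s2, s3, s4, s5, s6, u, h1, h2]"
      by (auto simp: numeral_eq_Suc length_Suc_conv)
    with cs factorization_iff have "(s1, s3, u, h1, h2) \<in> factorization_exponents_C2_5 x y"
      and "n = 2*s1 + 4*s3 + u + h1 + h2" by auto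
    then show "n \<in> ?sizes" by force
  next
    fix n assume "n \<in> ?sizes"
    then obtain s t u h1 h2
      where "n = 2*s + 4*t + u + h1 + h2" "(s, t, u, h1, h2) \<in> factorization_exponents_C2_5 x y"
      by auto
    then show "n \<in> ?factorization_lengths"
      using factorization_iff
      by (intro CollectI exI[of _ "[s, s, t, t, t, t, u, h1, h2]"])
        (simp add: atoms_C2_5_def del: of_counts.simps)
  qed
qed

lemma double_neq_odd_numeral: "2 * (s :: nat) \<noteq> numeral (Num.Bit1 k)"
  using odd_numeral[of k] by (metis dvd_triv_left)

lemma factorization_exponents_C2_5_3_2:
  "factorization_exponents_C2_5 3 2 = {(0, 0, 2, 1, 0), (1, 0, 1, 0, 1), (1, 1, 0, 1, 0)}"
  (is "_ = ?solutions")
proof (intro equalityI subsetI)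
  fix c assume "c \<in> factorization_exponents_C2_5 3 2"
  then obtain s t u h1 h2 where c: "c = (s, t, u, h1, h2)"
    and eqs: "2*s + u + h1 = 3" "2*t + u + h2 = 2" "h1 + h2 = 1"
    unfolding factorization_exponents_C2_5_def by blast
  have "u \<le> 3" "h1 \<le> 1" using eqs by linarith+
  then have "u = 0 \<or> u = 1 \<or> u = 2 \<or> u = 3" "h1 = 0 \<or> h1 = 1" by auto
  then show "c \<in> ?solutions"
    using eqs unfolding c by (elim disjE) (simp_all add: double_neq_odd_numeral)
qed (auto simp: factorization_exponents_C2_5_def)

lemma factorization_exponents_C2_5_2_3:
  "factorization_exponents_C2_5 2 3 = {(0, 0, 2, 0, 1), (0, 1, 1, 1, 0), (1, 1, 0, 0, 1)}"
  (is "_ = ?solutions")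
proof (intro equalityI subsetI)
  fix c assume "c \<in> factorization_exponents_C2_5 2 3"
  then obtain s t u h1 h2 where c: "c = (s, t, u, h1, h2)"
    and eqs: "2*s + u + h1 = 2" "2*t + u + h2 = 3" "h1 + h2 = 1"
    unfolding factorization_exponents_C2_5_def by blast
  have "u \<le> 2" "h1 \<le> 1" using eqs by linarith+
  then have "u = 0 \<or> u = 1 \<or> u = 2" "h1 = 0 \<or> h1 = 1" by auto
  then show "c \<in> ?solutions"
    using eqs unfolding c by (elim disjE) (simp_all add: double_neq_odd_numeral)
qed (auto simp: factorization_exponents_C2_5_def)

lemma factorization_exponents_C2_5_4_3:
  "factorization_exponents_C2_5 4 3 = {(0, 0, 3, 1, 0), (1, 0, 2, 0, 1), (1, 1, 1, 1, 0), (2, 1, 0, 0, 1)}"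
  (is "_ = ?solutions")
proof (intro equalityI subsetI)
  fix c assume "c \<in> factorization_exponents_C2_5 4 3"
  then obtain s t u h1 h2 where c: "c = (s, t, u, h1, h2)"
    and eqs: "2*s + u + h1 = 4" "2*t + u + h2 = 3" "h1 + h2 = 1"
    unfolding factorization_exponents_C2_5_def by blast
  have "u \<le> 4" "h1 \<le> 1" using eqs by linarith+
  then have "u = 0 \<or> u = 1 \<or> u = 2 \<or> u = 3 \<or> u = 4" "h1 = 0 \<or> h1 = 1" by auto
  then show "c \<in> ?solutions"
    using eqs unfolding c by (elim disjE) (simp_all add: double_neq_odd_numeral)
qed (auto simp: factorization_exponents_C2_5_def)

lemma factorization_exponents_C2_5_3_4:
  "factorization_exponents_C2_5 3 4 = {(0, 0, 3, 0, 1), (0, 1, 2, 1, 0), (1, 1, 1, 0, 1), (1, 2, 0, 1, 0)}"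
  (is "_ = ?solutions")
proof (intro equalityI subsetI)
  fix c assume "c \<in> factorization_exponents_C2_5 3 4"
  then obtain s t u h1 h2 where c: "c = (s, t, u, h1, h2)"
    and eqs: "2*s + u + h1 = 3" "2*t + u + h2 = 4" "h1 + h2 = 1"
    unfolding factorization_exponents_C2_5_def by blast
  have "u \<le> 3" "h1 \<le> 1" using eqs by linarith+
  then have "u = 0 \<or> u = 1 \<or> u = 2 \<or> u = 3" "h1 = 0 \<or> h1 = 1" by auto
  then show "c \<in> ?solutions"
    using eqs unfolding c by (elim disjE) (simp_all add: double_neq_odd_numeral)
qed (auto simp: factorization_exponents_C2_5_def)

lemma factorization_exponents_C2_5_4_5:
  "factorization_exponents_C2_5 4 5 =
    {(0, 0, 4, 0, 1), (0, 1, 3, 1, 0), (1, 1, 2, 0, 1), (1, 2, 1, 1, 0), (2, 2, 0, 0, 1)}"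
  (is "_ = ?solutions")
proof (intro equalityI subsetI)
  fix c assume "c \<in> factorization_exponents_C2_5 4 5"
  then obtain s t u h1 h2 where c: "c = (s, t, u, h1, h2)"
    and eqs: "2*s + u + h1 = 4" "2*t + u + h2 = 5" "h1 + h2 = 1"
    unfolding factorization_exponents_C2_5_def by blast
  have "u \<le> 4" "h1 \<le> 1" using eqs by linarith+
  then have "u = 0 \<or> u = 1 \<or> u = 2 \<or> u = 3 \<or> u = 4" "h1 = 0 \<or> h1 = 1" by auto
  then show "c \<in> ?solutions"
    using eqs unfolding c by (elim disjE) (simp_all add: double_neq_odd_numeral)
qed (auto simp: factorization_exponents_C2_5_def)

theorem lemma3p4:
  shows "\<forall>S \<in> {{3,4,7}, {3,6,7}, {4,5,8,9}, {4,7,8,11}, {5,8,9,12,13}}.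
           S \<in> system_of_lengths TYPE(6) \<and> S \<in> system_of_lengths TYPE(5 \<Rightarrow> 2)"
proof -
  have C6: "lengths (seq_C6 a 1 b) \<in> system_of_lengths TYPE(6)" if "6 dvd a + 2 + 5*b" for a b
    using that by (intro lengths_in_system_of_lengths) (simp add: zero_sum_seq_C6 del: of_counts.simps)
  have C2_5: "lengths (seq_C2_5 x x y y y y 1) \<in> system_of_lengths TYPE(5 \<Rightarrow> 2)"
    if "odd (x + y)" for x y
    using that by (intro lengths_in_system_of_lengths) (simp add: zero_sum_seq_C2_5 del: of_counts.simps)
  have "lengths (seq_C6 6 1 8) = {3, 4, 7}" "lengths (seq_C6 10 1 6) = {3, 6, 7}"
    "lengths (seq_C6 12 1 8) = {4, 5, 8, 9}" "lengths (seq_C6 10 1 12) = {4, 7, 8, 11}"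
    "lengths (seq_C6 16 1 12) = {5, 8, 9, 12, 13}"
    unfolding lengths_seq_C6 factorization_exponents_C6_6_8 factorization_exponents_C6_10_6
      factorization_exponents_C6_12_8 factorization_exponents_C6_10_12 factorization_exponents_C6_16_12
    by (simp_all add: eval_nat_numeral)
  moreover have "lengths (seq_C2_5 3 3 2 2 2 2 1) = {3, 4, 7}" "lengths (seq_C2_5 2 2 3 3 3 3 1) = {3, 6, 7}"
    "lengths (seq_C2_5 4 4 3 3 3 3 1) = {4, 5, 8, 9}" "lengths (seq_C2_5 3 3 4 4 4 4 1) = {4, 7, 8, 11}"
    "lengths (seq_C2_5 4 4 5 5 5 5 1) = {5, 8, 9, 12, 13}"
    unfolding lengths_seq_C2_5 factorization_exponents_C2_5_3_2 factorization_exponents_C2_5_2_3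
      factorization_exponents_C2_5_4_3 factorization_exponents_C2_5_3_4 factorization_exponents_C2_5_4_5
    by (simp_all add: eval_nat_numeral)
  ultimately show ?thesis
    using C6[of 6 8] C6[of 10 6] C6[of 12 8] C6[of 10 12] C6[of 16 12]
      C2_5[of 3 2] C2_5[of 2 3] C2_5[of 4 3] C2_5[of 3 4] C2_5[of 4 5]
    by auto
qed

end
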